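(* If $M$ is a matroid of rank $r\geq 2$, then $M$ is simple if and only if $M$ is $(r-1,1)$-uniform.
   Context: For positive integers $k,\ell$, a matroid is $(k,\ell)$-uniform if it has no minor isomorphic to $U_{k,k}\oplus U_{0,\ell}$. *)

theory Defs
  imports Main
begin

type_synonym 'a matroid = "'a set \<times> ('a set \<Rightarrow> bool)"

definition ground :: "'a matroid \<Rightarrow> 'a set" where
  "ground M = fst M"

definition indep :: "'a matroid \<Rightarrow> 'a set \<Rightarrow> bool" where
  "indep M = snd M"

definition matroid :: "'a matroid \<Rightarrow> bool" where
  "matroid M \<longleftrightarrow>
     finite (ground M) \<and>
     indep M {} \<and>
     (\<forall>X. indep M X \<longrightarrow> X \<subseteq> ground M) \<and>
     (\<forall>X Y. indep M Y \<and> X \<subseteq> Y \<longrightarrow> indep M X) \<and>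
     (\<forall>X Y. indep M X \<and> indep M Y \<and> card X < card Y \<longrightarrow>
        (\<exists>y\<in>Y - X. indep M (insert y X)))"

definition rk :: "'a matroid \<Rightarrow> 'a set \<Rightarrow> nat" where
  "rk M X = Max (card ` {Y. Y \<subseteq> X \<and> indep M Y})"

definition matroid_rank :: "'a matroid \<Rightarrow> nat" where
  "matroid_rank M = rk M (ground M)"

definition simple :: "'a matroid \<Rightarrow> bool" where
  "simple M \<longleftrightarrow>
     (\<forall>x\<in>ground M. indep M {x}) \<and>
     (\<forall>x\<in>ground M. \<forall>y\<in>ground M. x \<noteq> y \<longrightarrow> indep M {x, y})"

text \<open>The minor M / C \ D (contract C, delete D), with C, D disjoint subsets of E.
  X is independent in M/C iff X avoids C and r(X \<union> C) = |X| + r(C).\<close>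
definition minor_of :: "'a matroid \<Rightarrow> 'a set \<Rightarrow> 'a set \<Rightarrow> 'a matroid" where
  "minor_of M C D =
     (ground M - C - D,
      \<lambda>X. X \<subseteq> ground M - C - D \<and> rk M (X \<union> C) = card X + rk M C)"

definition is_minor :: "'a matroid \<Rightarrow> 'a matroid \<Rightarrow> bool" where
  "is_minor N M \<longleftrightarrow>
     (\<exists>C D. C \<subseteq> ground M \<and> D \<subseteq> ground M \<and> C \<inter> D = {} \<and> N = minor_of M C D)"

definition matroid_iso :: "'a matroid \<Rightarrow> 'b matroid \<Rightarrow> bool" where
  "matroid_iso M N \<longleftrightarrow>
     (\<exists>f. bij_betw f (ground M) (ground N) \<and>
          (\<forall>X. X \<subseteq> ground M \<longrightarrow> (indep M X \<longleftrightarrow> indep N (f ` X))))"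

text \<open>U_{k,k} \<oplus> U_{0,l} on ground set {0..<k+l}: elements < k are coloops,
  the remaining l elements are loops.\<close>
definition U_kk_plus_U0l :: "nat \<Rightarrow> nat \<Rightarrow> nat matroid" where
  "U_kk_plus_U0l k l = ({..<k+l}, \<lambda>X. X \<subseteq> {..<k})"

definition kl_uniform :: "nat \<Rightarrow> nat \<Rightarrow> 'a matroid \<Rightarrow> bool" where
  "kl_uniform k l M \<longleftrightarrow>
     \<not> (\<exists>N. is_minor N M \<and> matroid_iso N (U_kk_plus_U0l k l))"

end

theory Submission
  imports Defs
begin

text \<open>A minor \<open>M / C \ D\<close> isomorphic to \<open>U_{r-1,r-1} \<oplus> U_{0,1}\<close> consists of \<open>r - 1\<close>
  elements that are independent in \<open>M / C\<close> together with a loop \<open>e\<close> of \<open>M / C\<close>.  As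
  \<open>r(M) = r\<close>, the contracted set \<open>C\<close> has rank at most 1, and in a simple matroid contracting a
  set of rank at most 1 creates no loops.  Conversely, a loop \<open>e\<close> (with \<open>C = {}\<close>) or a
  parallel pair \<open>{x, e}\<close> (with \<open>C = {x}\<close>) yields such a minor: extend \<open>C\<close> to an independent
  set \<open>Z\<close> of size \<open>r - 1 + |C|\<close>, contract \<open>C\<close> and delete everything outside \<open>Z \<union> {e}\<close>.\<close>

lemma matroid_finite_ground: "matroid M \<Longrightarrow> finite (ground M)"
  unfolding matroid_def by blast

lemma matroid_indep_empty: "matroid M \<Longrightarrow> indep M {}"
  unfolding matroid_def by blast

lemma matroid_indep_subset_ground: "matroid M \<Longrightarrow> indep M X \<Longrightarrow> X \<subseteq> ground M"
  unfolding matroid_def by blast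

lemma matroid_indep_subset: "matroid M \<Longrightarrow> indep M Y \<Longrightarrow> X \<subseteq> Y \<Longrightarrow> indep M X"
  unfolding matroid_def by blast

lemma matroid_indep_augment:
  "matroid M \<Longrightarrow> indep M X \<Longrightarrow> indep M Y \<Longrightarrow> card X < card Y \<Longrightarrow>
    \<exists>y\<in>Y - X. indep M (insert y X)"
  unfolding matroid_def by blast

lemma matroid_indep_finite: "matroid M \<Longrightarrow> indep M X \<Longrightarrow> finite X"
  by (rule finite_subset[OF matroid_indep_subset_ground matroid_finite_ground])

lemma matroid_indep_extend:
  assumes M: "matroid M" and "indep M X" "indep M Y" "card X \<le> n" "n \<le> card Y"
  obtains Z where "X \<subseteq> Z" "indep M Z" "card Z = n"
proof -
  have "\<exists>Z. X \<subseteq> Z \<and> indep M Z \<and> card Z = m" if "card X \<le> m" "m \<le> card Y" for m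
    using that
  proof (induction m rule: dec_induct)
    case base
    then show ?case using \<open>indep M X\<close> by blast
  next
    case (step m)
    then obtain Z where Z: "X \<subseteq> Z" "indep M Z" "card Z = m" by auto
    with step.hyps(2) \<open>Suc m \<le> card Y\<close> obtain y where "y \<in> Y - Z" "indep M (insert y Z)"
      using matroid_indep_augment[OF M Z(2) \<open>indep M Y\<close>] by auto
    with Z matroid_indep_finite[OF M Z(2)] show ?case
      by (intro exI[of _ "insert y Z"]) auto
  qed
  with that assms(4,5) show thesis by blast
qed

lemma finite_card_indep_subsets:
  assumes M: "matroid M"
  shows "finite (card ` {Y. Y \<subseteq> X \<and> indep M Y})"
proof (rule finite_subset)
  show "card ` {Y. Y \<subseteq> X \<and> indep M Y} \<subseteq> {..card (ground M)}"
    using card_mono[OF matroid_finite_ground[OF M] matroid_indep_subset_ground[OF M]] by auto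
qed simp

lemma card_le_rk: "matroid M \<Longrightarrow> Y \<subseteq> X \<Longrightarrow> indep M Y \<Longrightarrow> card Y \<le> rk M X"
  unfolding rk_def by (rule Max_ge[OF finite_card_indep_subsets]) auto

lemma obtain_indep_subset_card_rk:
  assumes "matroid M"
  obtains Y where "Y \<subseteq> X" "indep M Y" "card Y = rk M X"
proof -
  have "rk M X \<in> card ` {Y. Y \<subseteq> X \<and> indep M Y}"
    unfolding rk_def using finite_card_indep_subsets[OF assms] matroid_indep_empty[OF assms]
    by (intro Max_in) auto
  then show ?thesis using that by auto
qed

lemma rk_mono: "matroid M \<Longrightarrow> X \<subseteq> X' \<Longrightarrow> rk M X \<le> rk M X'"
  by (metis card_le_rk obtain_indep_subset_card_rk order_trans)

lemma rk_le_card: "matroid M \<Longrightarrow> finite X \<Longrightarrow> rk M X \<le> card X"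
  by (metis card_mono obtain_indep_subset_card_rk)

lemma rk_empty: "matroid M \<Longrightarrow> rk M {} = 0"
  using rk_le_card[of M "{}"] by simp

lemma indep_iff_rk_eq_card:
  assumes "matroid M" "finite X"
  shows "indep M X \<longleftrightarrow> rk M X = card X"
proof
  assume "indep M X"
  then show "rk M X = card X"
    using card_le_rk[OF assms(1), of X X] rk_le_card[OF assms] by simp
next
  assume rk_X: "rk M X = card X"
  obtain Y where "Y \<subseteq> X" "indep M Y" "card Y = rk M X"
    using obtain_indep_subset_card_rk[OF assms(1)] .
  then show "indep M X" using rk_X assms(2) card_subset_eq by metis
qed

lemma rk_insert_le:
  assumes M: "matroid M"
  shows "rk M (insert e C) \<le> rk M C + 1"
proof -
  obtain Y where Y: "Y \<subseteq> insert e C" "indep M Y" "card Y = rk M (insert e C)"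
    using obtain_indep_subset_card_rk[OF M] .
  have "card (Y - {e}) \<le> rk M C"
    by (rule card_le_rk[OF M]) (use Y(1) matroid_indep_subset[OF M Y(2)] in auto)
  moreover have "card Y \<le> card (Y - {e}) + 1"
    using matroid_indep_finite[OF M Y(2)] by (cases "e \<in> Y") (auto simp: card_Diff_singleton)
  ultimately show ?thesis using Y(3) by linarith
qed

lemma ground_minor_of: "ground (minor_of M C D) = ground M - C - D"
  by (simp add: ground_def minor_of_def)

lemma indep_minor_of:
  "indep (minor_of M C D) X \<longleftrightarrow> X \<subseteq> ground M - C - D \<and> rk M (X \<union> C) = card X + rk M C"
  by (simp add: indep_def minor_of_def)

lemma is_minor_minor_of:
  "C \<subseteq> ground M \<Longrightarrow> D \<subseteq> ground M \<Longrightarrow> C \<inter> D = {} \<Longrightarrow> is_minor (minor_of M C D) M"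
  unfolding is_minor_def by blast

lemma indep_minor_of_iff_indep_Un:
  assumes M: "matroid M" and C: "indep M C" and X: "X \<subseteq> ground M - C - D"
  shows "indep (minor_of M C D) X \<longleftrightarrow> indep M (X \<union> C)"
proof -
  have fin_X: "finite X" using X finite_subset matroid_finite_ground[OF M] by blast
  have fin_C: "finite C" using matroid_indep_finite[OF M C] .
  have "card (X \<union> C) = card X + card C"
    using X by (intro card_Un_disjoint fin_X fin_C) blast
  moreover have "rk M C = card C" using indep_iff_rk_eq_card[OF M fin_C] C by blast
  ultimately show ?thesis
    using X indep_iff_rk_eq_card[OF M, of "X \<union> C"] fin_X fin_C by (simp add: indep_minor_of)
qed

lemma ground_U_kk_plus_U0l: "ground (U_kk_plus_U0l k l) = {..<k + l}"
  by (simp add: ground_def U_kk_plus_U0l_def)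

lemma indep_U_kk_plus_U0l: "indep (U_kk_plus_U0l k l) Y \<longleftrightarrow> Y \<subseteq> {..<k}"
  by (simp add: indep_def U_kk_plus_U0l_def)

lemma matroid_iso_U_kk_plus_U01I:
  assumes B: "finite B" "card B = k" and e: "e \<notin> B" and ground_N: "ground N = insert e B"
    and indep_N: "\<And>X. X \<subseteq> ground N \<Longrightarrow> indep N X \<longleftrightarrow> X \<subseteq> B"
  shows "matroid_iso N (U_kk_plus_U0l k 1)"
proof -
  obtain g where g: "bij_betw g B {..<k}"
    using finite_same_card_bij[OF B(1) finite_lessThan] B(2) by auto
  define f where "f = g(e := k)"
  have f_B: "bij_betw f B {..<k}"
    unfolding f_def by (rule bij_betw_cong[THEN iffD2, OF _ g]) (use e in auto)
  have "bij_betw f (B \<union> {e}) ({..<k} \<union> {f e})"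
    by (rule notIn_Un_bij_betw[OF e _ f_B]) (simp add: f_def)
  then have f_ground: "bij_betw f (ground N) {..<k + 1}"
    using ground_N by (simp add: f_def lessThan_Suc)
  show ?thesis unfolding matroid_iso_def
  proof (intro exI conjI allI impI)
    show "bij_betw f (ground N) (ground (U_kk_plus_U0l k 1))"
      using f_ground by (simp add: ground_U_kk_plus_U0l)
    fix X assume X: "X \<subseteq> ground N"
    have "f ` X \<subseteq> {..<k} \<longleftrightarrow> X \<subseteq> B"
    proof
      assume "f ` X \<subseteq> {..<k}"
      then have "e \<notin> X" by (auto simp: f_def)
      then show "X \<subseteq> B" using X ground_N by auto
    next
      assume "X \<subseteq> B"
      then show "f ` X \<subseteq> {..<k}" using bij_betw_imp_surj_on[OF f_B] by blast
    qed
    then show "indep N X \<longleftrightarrow> indep (U_kk_plus_U0l k 1) (f ` X)"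
      using indep_N[OF X] by (simp add: indep_U_kk_plus_U0l)
  qed
qed

lemma matroid_iso_U_kk_plus_U01E:
  assumes "matroid_iso N (U_kk_plus_U0l k 1)"
  obtains e B where "ground N = insert e B" "e \<notin> B" "card B = k" "indep N B" "\<not> indep N {e}"
proof -
  obtain f where f: "bij_betw f (ground N) {..<k + 1}"
    and iso: "\<And>X. X \<subseteq> ground N \<Longrightarrow> indep N X \<longleftrightarrow> f ` X \<subseteq> {..<k}"
    using assms unfolding matroid_iso_def ground_U_kk_plus_U0l indep_U_kk_plus_U0l by blast
  have "k \<in> f ` ground N" using bij_betw_imp_surj_on[OF f] by simp
  then obtain e where e: "e \<in> ground N" "f e = k" by auto
  define B where "B = ground N - {e}"
  have f_B: "bij_betw f B {..<k}"
    using bij_betw_DiffI[OF f, of "{e}" "{k}"] e by (simp add: B_def lessThan_Suc)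
  show thesis
  proof (rule that)
    show "ground N = insert e B" using e by (auto simp: B_def)
    show "e \<notin> B" by (simp add: B_def)
    show "card B = k" using bij_betw_same_card[OF f_B] by simp
    show "indep N B" using iso[of B] bij_betw_imp_surj_on[OF f_B] by (auto simp: B_def)
    show "\<not> indep N {e}" using iso[of "{e}"] e by simp
  qed
qed

lemma simple_rk_insert:
  assumes M: "matroid M" and simple: "simple M"
    and C: "C \<subseteq> ground M" "rk M C \<le> 1" and e: "e \<in> ground M - C"
  shows "rk M (insert e C) = rk M C + 1"
proof (cases "C = {}")
  case True
  have "indep M {e}" using simple e unfolding simple_def by simp
  then show ?thesis using True indep_iff_rk_eq_card[OF M, of "{e}"] rk_empty[OF M] by simp
next
  case False
  then obtain c where c: "c \<in> C" by blast
  have "e \<noteq> c" "c \<in> ground M" using c e C(1) by auto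
  then have "indep M {e, c}" using simple e unfolding simple_def by simp
  moreover have "{e, c} \<subseteq> insert e C" using c by simp
  ultimately have "card {e, c} \<le> rk M (insert e C)" by (rule card_le_rk[OF M, rotated])
  with \<open>e \<noteq> c\<close> have "2 \<le> rk M (insert e C)" by simp
  then show ?thesis using C(2) rk_insert_le[OF M, of e C] by linarith
qed

lemma simple_imp_kl_uniform:
  assumes M: "matroid M" and simple: "simple M" and rank: "matroid_rank M \<le> k + 1"
  shows "kl_uniform k 1 M"
  unfolding kl_uniform_def
proof
  assume "\<exists>N. is_minor N M \<and> matroid_iso N (U_kk_plus_U0l k 1)"
  then obtain C D where C: "C \<subseteq> ground M"
    and iso: "matroid_iso (minor_of M C D) (U_kk_plus_U0l k 1)"
    unfolding is_minor_def by blast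
  obtain e B where ground: "ground M - C - D = insert e B" and "card B = k"
    and B: "indep (minor_of M C D) B" and loop: "\<not> indep (minor_of M C D) {e}"
    using iso by (elim matroid_iso_U_kk_plus_U01E) (simp add: ground_minor_of)
  have "rk M (B \<union> C) = k + rk M C" using B \<open>card B = k\<close> by (simp add: indep_minor_of)
  moreover have "B \<union> C \<subseteq> ground M" using C ground by blast
  then have "rk M (B \<union> C) \<le> k + 1"
    using rk_mono[OF M] rank unfolding matroid_rank_def by (meson order_trans)
  ultimately have "rk M C \<le> 1" by linarith
  moreover have "rk M (insert e C) \<noteq> rk M C + 1" using loop ground by (simp add: indep_minor_of)
  moreover have "e \<in> ground M - C" using ground by blast
  ultimately show False using simple_rk_insert[OF M simple C] by blast
qed

lemma not_simple_obtain_dependent_insert: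
  assumes M: "matroid M" and "\<not> simple M"
  obtains C e where "indep M C" "card C \<le> 1" "e \<in> ground M" "\<not> indep M (insert e C)"
proof (cases "\<forall>x\<in>ground M. indep M {x}")
  case True
  then obtain e x where "e \<in> ground M" "x \<in> ground M" "\<not> indep M {e, x}"
    using \<open>\<not> simple M\<close> unfolding simple_def by blast
  with True show thesis using that[of "{x}" e] by simp
next
  case False
  then show thesis using that[of "{}"] matroid_indep_empty[OF M] by auto
qed

lemma minor_of_iso_U_kk_plus_U01:
  assumes M: "matroid M" and Z: "indep M Z" "C \<subseteq> Z"
    and e: "e \<in> ground M" "\<not> indep M (insert e C)"
  shows "matroid_iso (minor_of M C (ground M - Z - {e})) (U_kk_plus_U0l (card Z - card C) 1)"
    (is "matroid_iso ?N _")
proof (rule matroid_iso_U_kk_plus_U01I)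
  have fin_Z: "finite Z" using matroid_indep_finite[OF M Z(1)] .
  have C: "indep M C" using matroid_indep_subset[OF M Z] .
  have "e \<notin> Z"
  proof
    assume "e \<in> Z"
    then have "insert e C \<subseteq> Z" using Z(2) by simp
    then show False using matroid_indep_subset[OF M Z(1)] e(2) by blast
  qed
  then show "e \<notin> Z - C" by simp
  show "finite (Z - C)" using fin_Z by simp
  show "card (Z - C) = card Z - card C" using card_Diff_subset[OF finite_subset[OF Z(2) fin_Z] Z(2)] .
  have "Z \<subseteq> ground M" using matroid_indep_subset_ground[OF M Z(1)] .
  then show ground: "ground ?N = insert e (Z - C)"
    using e(1) \<open>e \<notin> Z\<close> Z(2) unfolding ground_minor_of by auto
  fix X assume X: "X \<subseteq> ground ?N"
  then have "indep ?N X \<longleftrightarrow> indep M (X \<union> C)"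
    by (intro indep_minor_of_iff_indep_Un[OF M C]) (simp add: ground_minor_of)
  also have "\<dots> \<longleftrightarrow> X \<subseteq> Z - C"
  proof
    assume indep_XC: "indep M (X \<union> C)"
    have "e \<notin> X"
    proof
      assume "e \<in> X"
      then have "insert e C \<subseteq> X \<union> C" by simp
      then show False using matroid_indep_subset[OF M indep_XC] e(2) by blast
    qed
    then show "X \<subseteq> Z - C" using X ground by auto
  next
    assume "X \<subseteq> Z - C"
    then have "X \<union> C \<subseteq> Z" using Z(2) by auto
    then show "indep M (X \<union> C)" by (rule matroid_indep_subset[OF M Z(1)])
  qed
  finally show "indep ?N X \<longleftrightarrow> X \<subseteq> Z - C" .
qed

lemma not_simple_imp_not_kl_uniform:
  assumes M: "matroid M" and "\<not> simple M" and rank: "k < matroid_rank M"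
  shows "\<not> kl_uniform k 1 M"
proof -
  obtain C e where C: "indep M C" "card C \<le> 1" and e: "e \<in> ground M" "\<not> indep M (insert e C)"
    using not_simple_obtain_dependent_insert[OF M \<open>\<not> simple M\<close>] .
  obtain Bas where Bas: "Bas \<subseteq> ground M" "indep M Bas" "card Bas = matroid_rank M"
    unfolding matroid_rank_def by (rule obtain_indep_subset_card_rk[OF M])
  have "k + card C \<le> card Bas" using C(2) rank Bas(3) by linarith
  then obtain Z where Z: "C \<subseteq> Z" "indep M Z" "card Z = k + card C"
    using matroid_indep_extend[OF M C(1) Bas(2) le_add2] by blast
  define D where "D = ground M - Z - {e}"
  have "matroid_iso (minor_of M C D) (U_kk_plus_U0l k 1)"
    using minor_of_iso_U_kk_plus_U01[OF M Z(2,1) e] Z(3) by (simp add: D_def)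
  moreover have "is_minor (minor_of M C D) M"
    using matroid_indep_subset_ground[OF M Z(2)] Z(1) by (intro is_minor_minor_of) (auto simp: D_def)
  ultimately show ?thesis unfolding kl_uniform_def by blast
qed

theorem lemma2p2:
  fixes M :: "'a matroid" and r :: nat
  assumes "matroid M" and "matroid_rank M = r" and "r \<ge> 2"
  shows "simple M \<longleftrightarrow> kl_uniform (r - 1) 1 M"
proof
  \<comment> \<open>only \<open>r \<ge> 1\<close> is used: for \<open>r = 1\<close> a loop or a parallel pair already gives \<open>U_{0,1}\<close> as a minor\<close>
  assume "simple M"
  then show "kl_uniform (r - 1) 1 M"
    using simple_imp_kl_uniform[OF assms(1)] assms(2) by simp
next
  assume "kl_uniform (r - 1) 1 M"
  then show "simple M"
    using not_simple_imp_not_kl_uniform[OF assms(1), of "r - 1"] assms(2,3) by auto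
qed

end
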